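(* There exist positive constants $c_1,c_2,c_3$, independent of $n$ and $t$, such that for all sufficiently large $n$, \[ \frac{1}{y_1(t)}\le \begin{cases} c_1\,n^{1-\beta}, & 0\le t\le 1,\\[2pt] c_2+c_3\,n^{\min\{1-\beta,\alpha\}}e^{-\lambda_1 t}, & t>1. \end{cases} \]
   Context: Fix constants $r_0,d_0\ge 0$ with $\lambda_0:=r_0-d_0<0$, $d_1>0$, $k>1$, $\alpha\in(0,1)$, $\beta\in(0,1)$. Let $f:[0,\infty)^2\to[0,\infty)$ satisfy: (A1) $f$ is Lipschitz continuous; (A2) $f(x,y)=r_1$ when $x+y=0$ and $f(x,y)=d_1$ when $x+y=1$, where $r_1:=f(0,0)>d_1$; (A3) $f(x,y)=\Phi(x+y)$ for some non-increasing function $\Phi:[0,\infty)\to[0,\infty)$; (A4) $f(x,y)\to0$ as $x\to\infty$ and as $y\to\infty$; (A5) $f(x,y)\ge \lambda_1(1-(x+y))+d_1$ for all $x,y\ge0$, where $\lambda_1:=r_1-d_1>0$. Put $\phi(x,y):=f(x,y)-d_1$. For each integer $n\ge1$ let $K=K(n):=kn$ and let $(y_0,y_1,y_\beta)$ solve \[ \dot y_0=\lambda_0 y_0,\qquad \dot y_1=\phi(y_0,y_1)\,y_1+n^{-\alpha}y_0,\qquad \dot y_\beta=\phi(y_0,y_1)\,y_\beta, \] with $(y_0(0),y_1(0),y_\beta(0))=(n/K,\,n^\beta/K,\,n^\beta/K)$. *)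

theory Defs
  imports "HOL-Analysis.Analysis"
begin

end

theory Submission
  imports Defs
begin

text \<open>
  The first equation gives y0 t = exp (\<lambda>0 t) / k. By (A5), w = 1 / y1 satisfies the linear
  differential inequality w' \<le> - \<lambda>1 (1 - y0) w + \<lambda>1; with the integrating factor
  exp (\<lambda>1 t + c exp (\<lambda>0 t)), where c = - \<lambda>1 / (k \<lambda>0), this yields
  1 / y1 t \<le> exp c (1 + exp (\<lambda>1 (t0 - t)) / y1 t0) whenever 0 \<le> t0 \<le> t.
  Taking t0 = 0 gives a bound of order 1 / y1 0 = k n^(1-\<beta>). Taking t0 = 1 gives a bound of
  order n^\<alpha>, because on [0, 1] the immigration term n^(-\<alpha>) y0 \<ge> n^(-\<alpha>) exp \<lambda>0 / k pushes y1
  above the line \<delta> n^(-\<alpha>) t, for some \<delta> > 0 depending only on \<lambda>0 and k.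
\<close>

lemma decreasing_of_deriv_nonpos_within:
  fixes g g' :: "real \<Rightarrow> real"
  assumes "a \<le> b" and sub: "{a..b} \<subseteq> S"
    and der: "\<And>t. t \<in> {a..b} \<Longrightarrow> (g has_real_derivative g' t) (at t within S)"
    and nonpos: "\<And>t. t \<in> {a..b} \<Longrightarrow> g' t \<le> 0"
  shows "g b \<le> g a"
proof (rule DERIV_nonpos_imp_decreasing_open[OF \<open>a \<le> b\<close>])
  fix x assume x: "a < x" "x < b"
  have "x \<in> interior S"
    using interior_mono[OF sub] x by auto
  then have "at x within S = at x"
    by (rule at_within_interior)
  then show "\<exists>y. DERIV g x :> y \<and> y \<le> 0"
    using der[of x] nonpos[of x] x by auto
next
  show "continuous_on {a..b} g"
    by (rule DERIV_continuous_on[where D=g'])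
      (rule has_field_derivative_subset[OF der], use sub in auto)
qed

lemma linear_ode_solution:
  fixes y :: "real \<Rightarrow> real"
  assumes der: "\<And>t. 0 \<le> t \<Longrightarrow> (y has_real_derivative a * y t) (at t within {0..})"
    and "0 \<le> t"
  shows "y t = y 0 * exp (a * t)"
proof -
  have "\<exists>C. \<forall>s\<in>{0..}. y s * exp (- a * s) = C"
  proof (rule has_field_derivative_zero_constant)
    fix s :: real assume "s \<in> {0..}"
    then show "((\<lambda>s. y s * exp (- a * s)) has_field_derivative 0) (at s within {0..})"
      by (auto intro!: derivative_eq_intros der simp: algebra_simps)
  qed simp
  then obtain C where "\<And>s. 0 \<le> s \<Longrightarrow> y s * exp (- a * s) = C"
    by auto
  from this[of 0] this[OF \<open>0 \<le> t\<close>] show ?thesis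
    by (simp add: exp_minus field_simps)
qed

text \<open>At a first zero the function would have to be increasing while coming down from
  positive values.\<close>

lemma pos_of_deriv_pos_at_zeros:
  fixes h h' :: "real \<Rightarrow> real"
  assumes h0: "h 0 > 0"
    and der: "\<And>t. 0 \<le> t \<Longrightarrow> (h has_real_derivative h' t) (at t within {0..})"
    and at_zeros: "\<And>t. 0 < t \<Longrightarrow> t \<le> b \<Longrightarrow> h t = 0 \<Longrightarrow> h' t > 0"
    and t: "0 \<le> t" "t \<le> b"
  shows "h t > 0"
proof (rule ccontr)
  assume "\<not> h t > 0"
  have cont: "\<And>b. continuous_on {0..b} h"
    by (rule DERIV_continuous_on[where D=h'])
      (rule has_field_derivative_subset[OF der], auto)
  define Z where "Z = {s \<in> {0..t}. h s = 0}"
  have "Z \<noteq> {}"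
    using IVT2'[where f=h and a=0 and b=t and y=0, OF _ _ t(1) cont] \<open>\<not> h t > 0\<close> h0
    unfolding Z_def by auto
  moreover have bdd: "bdd_below Z"
    unfolding Z_def by (auto intro: bdd_belowI[where m=0])
  moreover have "closed Z"
    unfolding Z_def by (rule continuous_closed_preimage_constant[OF cont]) auto
  ultimately have "Inf Z \<in> Z"
    by (rule closed_contains_Inf)
  define z where "z = Inf Z"
  have z: "0 \<le> z" "z \<le> t" "h z = 0"
    using \<open>Inf Z \<in> Z\<close> unfolding z_def Z_def by auto
  have "z > 0"
    using z h0 by (cases "z = 0") auto
  have before_z: "h s > 0" if s: "0 \<le> s" "s < z" for s
  proof (rule ccontr)
    assume "\<not> h s > 0"
    then obtain w where w: "0 \<le> w" "w \<le> s" "h w = 0"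
      using IVT2'[where f=h and a=0 and b=s and y=0, OF _ _ s(1) cont] h0 by auto
    then have "w \<in> Z"
      using s z unfolding Z_def by auto
    then have "z \<le> w"
      unfolding z_def using bdd by (rule cInf_lower)
    then show False
      using w s by simp
  qed
  obtain d where d: "d > 0" "\<forall>e>0. z - e \<in> {0..} \<longrightarrow> e < d \<longrightarrow> h (z - e) < h z"
    using has_real_derivative_pos_inc_left[OF der[OF z(1)] at_zeros[OF \<open>z > 0\<close> _ z(3)]] z t
    by auto
  define e where "e = min (d / 2) (z / 2)"
  have "h (z - e) < 0"
    using d \<open>z > 0\<close> z unfolding e_def by auto
  moreover have "h (z - e) > 0"
    using before_z[of "z - e"] d \<open>z > 0\<close> unfolding e_def by auto
  ultimately show False
    by simp
qed

lemma integrating_factor_comparison: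
  fixes w w' A a b B B' :: "real \<Rightarrow> real"
  assumes "t0 \<le> t" "{t0..t} \<subseteq> S"
    and w: "\<And>s. s \<in> {t0..t} \<Longrightarrow> (w has_real_derivative w' s) (at s within S)"
    and A: "\<And>s. s \<in> {t0..t} \<Longrightarrow> (A has_real_derivative a s) (at s within S)"
    and B: "\<And>s. s \<in> {t0..t} \<Longrightarrow> (B has_real_derivative B' s) (at s within S)"
    and w_ineq: "\<And>s. s \<in> {t0..t} \<Longrightarrow> w' s \<le> - a s * w s + b s"
    and B_ge: "\<And>s. s \<in> {t0..t} \<Longrightarrow> b s * exp (A s) \<le> B' s"
  shows "w t * exp (A t) - B t \<le> w t0 * exp (A t0) - B t0"
proof (rule decreasing_of_deriv_nonpos_within[OF assms(1,2)])
  fix s assume s: "s \<in> {t0..t}"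
  show "((\<lambda>s. w s * exp (A s) - B s) has_real_derivative
      (w' s + a s * w s) * exp (A s) - B' s) (at s within S)"
    by (auto intro!: derivative_eq_intros w[OF s] A[OF s] B[OF s] simp: algebra_simps)
  have "(w' s + a s * w s) * exp (A s) \<le> b s * exp (A s)"
    using w_ineq[OF s] by (intro mult_right_mono) auto
  with B_ge[OF s] show "(w' s + a s * w s) * exp (A s) - B' s \<le> 0"
    by linarith
qed

lemma powr_min_exponent:
  fixes x :: real
  assumes "1 \<le> x"
  shows "x powr min a b = min (x powr a) (x powr b)"
  using powr_mono[OF _ assms, of a b] powr_mono[OF _ assms, of b a] by (auto simp: min_def)

lemma min_scaled_powr_le:
  fixes x c :: real
  assumes "1 \<le> x" "1 \<le> c"
  shows "min (c * x powr a) (x powr b) \<le> c * x powr min a b"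
proof -
  have "min (c * x powr a) (x powr b) \<le> min (c * x powr a) (c * x powr b)"
    using assms(2) by (intro min.mono) (auto simp: mult_le_cancel_right1)
  also have "\<dots> = c * x powr min a b"
    using assms by (simp add: min_mult_distrib_left powr_min_exponent)
  finally show ?thesis .
qed

locale logistic_immigration_system =
  fixes l0 l1 k \<epsilon> :: real
    and \<phi> :: "real \<Rightarrow> real \<Rightarrow> real"
    and y0 y1 :: "real \<Rightarrow> real"
  assumes l0_neg: "l0 < 0" and l1_pos: "l1 > 0" and k_gt_1: "k > 1" and \<epsilon>_pos: "\<epsilon> > 0"
    and \<phi>_ge: "\<And>x y. 0 \<le> x \<Longrightarrow> 0 \<le> y \<Longrightarrow> l1 * (1 - (x + y)) \<le> \<phi> x y"
    and y0_deriv: "\<And>t. 0 \<le> t \<Longrightarrow> (y0 has_real_derivative l0 * y0 t) (at t within {0..})"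
    and y1_deriv: "\<And>t. 0 \<le> t \<Longrightarrow>
      (y1 has_real_derivative \<phi> (y0 t) (y1 t) * y1 t + \<epsilon> * y0 t) (at t within {0..})"
    and y0_0: "y0 0 = 1 / k" and y1_0_pos: "y1 0 > 0"
begin

text \<open>gain is the integral of l1 * y0 over [0, \<infinity>), the exponent of the integrating factor at t = 0.\<close>

definition gain :: real where
  "gain = - l1 / (k * l0)"

definition barrier_slope :: real where
  "barrier_slope = min (exp l0 / (2 * k)) (1 - 1 / k)"

lemma gain_pos: "gain > 0"
  using l0_neg l1_pos k_gt_1 unfolding gain_def by (simp add: divide_pos_neg mult_pos_neg)

lemma barrier_slope_pos: "barrier_slope > 0"
  using k_gt_1 unfolding barrier_slope_def by (simp add: field_simps)

lemma y0_eq: "0 \<le> t \<Longrightarrow> y0 t = exp (l0 * t) / k"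
  using linear_ode_solution[OF y0_deriv] y0_0 by simp

lemma y0_pos: "0 \<le> t \<Longrightarrow> 0 < y0 t"
  using k_gt_1 by (simp add: y0_eq)

lemma y0_le: "0 \<le> t \<Longrightarrow> y0 t \<le> 1 / k"
  using l0_neg k_gt_1 by (simp add: y0_eq divide_right_mono mult_nonpos_nonneg)

lemma y1_pos: "0 \<le> t \<Longrightarrow> 0 < y1 t"
  by (rule pos_of_deriv_pos_at_zeros[OF y1_0_pos y1_deriv _ _ order_refl])
    (use \<epsilon>_pos y0_pos in auto)

lemma y1_deriv_ge:
  assumes "0 \<le> t" "0 \<le> y1 t"
  shows "l1 * (1 - y0 t - y1 t) * y1 t + \<epsilon> * y0 t \<le> \<phi> (y0 t) (y1 t) * y1 t + \<epsilon> * y0 t"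
  using mult_right_mono[OF \<phi>_ge[OF less_imp_le[OF y0_pos] assms(2)] assms(2)] assms(1)
  by (simp add: algebra_simps)

lemma y1_at_1_gt:
  assumes "\<epsilon> \<le> 1"
  shows "barrier_slope * \<epsilon> < y1 1"
proof -
  let ?h = "\<lambda>t. y1 t - barrier_slope * \<epsilon> * t"
  let ?h' = "\<lambda>t. \<phi> (y0 t) (y1 t) * y1 t + \<epsilon> * y0 t - barrier_slope * \<epsilon>"
  have "?h 1 > 0"
  proof (rule pos_of_deriv_pos_at_zeros[where h = ?h and h' = ?h' and b = 1])
    fix t :: real assume "0 \<le> t"
    show "(?h has_real_derivative ?h' t) (at t within {0..})"
      by (rule derivative_eq_intros y1_deriv[OF \<open>0 \<le> t\<close>] refl)+ simp
  next
    fix t :: real assume t: "0 < t" "t \<le> 1" and "?h t = 0"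
    then have y1t: "y1 t = barrier_slope * \<epsilon> * t"
      by simp
    have "y1 t \<le> barrier_slope"
      using y1t t \<epsilon>_pos barrier_slope_pos assms by (simp add: mult_le_one)
    then have "0 \<le> 1 - y0 t - y1 t"
      using y0_le[of t] t unfolding barrier_slope_def by simp
    moreover have "0 \<le> y1 t"
      using y1t t \<epsilon>_pos barrier_slope_pos by simp
    ultimately have "\<epsilon> * y0 t \<le> \<phi> (y0 t) (y1 t) * y1 t + \<epsilon> * y0 t"
      using y1_deriv_ge[of t] t l1_pos by (smt (verit) mult_nonneg_nonneg)
    moreover have "barrier_slope * \<epsilon> < \<epsilon> * y0 t"
    proof -
      have "exp l0 / k \<le> y0 t"
        using t l0_neg k_gt_1 by (simp add: y0_eq divide_right_mono mult_le_cancel_left1)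
      moreover have "exp l0 / (2 * k) < exp l0 / k"
        using k_gt_1 by (simp add: field_simps)
      ultimately have "barrier_slope < y0 t"
        unfolding barrier_slope_def by linarith
      then show ?thesis
        using \<epsilon>_pos by (simp add: mult.commute)
    qed
    ultimately show "0 < ?h' t"
      by linarith
  qed (use y1_0_pos in auto)
  then show ?thesis
    by simp
qed

lemma inverse_y1_le:
  assumes "0 \<le> t0" "t0 \<le> t"
  shows "1 / y1 t \<le> exp gain * (1 + exp (l1 * (t0 - t)) / y1 t0)"
proof -
  define A where "A s = l1 * s + gain * exp (l0 * s)" for s
  define D where "D s = \<phi> (y0 s) (y1 s) * y1 s + \<epsilon> * y0 s" for s
  have A_bounds: "l1 * s \<le> A s" "A s \<le> l1 * s + gain" if "0 \<le> s" for s
    using gain_pos l0_neg that by (simp_all add: A_def mult_nonpos_nonneg)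
  have "1 / y1 t * exp (A t) - exp gain * exp (l1 * t)
      \<le> 1 / y1 t0 * exp (A t0) - exp gain * exp (l1 * t0)"
  proof (rule integrating_factor_comparison[where S = "{0..}" and b = "\<lambda>_. l1"])
    fix s assume "s \<in> {t0..t}"
    then have s: "0 \<le> s"
      using assms by auto
    show "((\<lambda>s. 1 / y1 s) has_real_derivative - (D s / (y1 s)\<^sup>2)) (at s within {0..})"
      using DERIV_inverse_fun[OF y1_deriv[OF s]] y1_pos[OF s]
      by (simp add: D_def inverse_eq_divide power2_eq_square)
    show "(A has_real_derivative l1 * (1 - y0 s)) (at s within {0..})"
      unfolding A_def
      by (rule derivative_eq_intros refl)+
        (use l0_neg k_gt_1 s in \<open>simp add: y0_eq gain_def field_simps\<close>)
    show "((\<lambda>s. exp gain * exp (l1 * s)) has_real_derivative l1 * (exp gain * exp (l1 * s)))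
        (at s within {0..})"
      by (rule derivative_eq_intros refl)+ (simp add: algebra_simps)
    have "l1 * (1 - y0 s - y1 s) * y1 s \<le> D s"
      using y1_deriv_ge[OF s less_imp_le[OF y1_pos[OF s]]] \<epsilon>_pos y0_pos[OF s]
      unfolding D_def by (smt (verit) mult_pos_pos)
    then have "- (D s / (y1 s)\<^sup>2) \<le> - (l1 * (1 - y0 s - y1 s) * y1 s) / (y1 s)\<^sup>2"
      by (simp add: divide_right_mono)
    also have "\<dots> = - (l1 * (1 - y0 s)) * (1 / y1 s) + l1"
      using y1_pos[OF s] by (simp add: field_simps power2_eq_square)
    finally show "- (D s / (y1 s)\<^sup>2) \<le> - (l1 * (1 - y0 s)) * (1 / y1 s) + l1" .
    show "l1 * exp (A s) \<le> l1 * (exp gain * exp (l1 * s))"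
      using A_bounds(2)[OF s] l1_pos by (simp add: mult_exp_exp add.commute)
  qed (use assms in auto)
  moreover have "1 / y1 t * exp (l1 * t) \<le> 1 / y1 t * exp (A t)"
    using A_bounds(1)[of t] assms y1_pos[of t] by (simp add: divide_right_mono)
  moreover have "1 / y1 t0 * exp (A t0) \<le> 1 / y1 t0 * (exp gain * exp (l1 * t0))"
    using A_bounds(2)[of t0] assms y1_pos[of t0]
    by (simp add: mult_exp_exp add.commute divide_right_mono)
  moreover have "0 \<le> exp gain * exp (l1 * t0)"
    by simp
  ultimately have "1 / y1 t * exp (l1 * t) \<le> exp gain * exp (l1 * t) + 1 / y1 t0 * (exp gain * exp (l1 * t0))"
    by linarith
  then have "exp (- (l1 * t)) * (1 / y1 t * exp (l1 * t))
      \<le> exp (- (l1 * t)) * (exp gain * exp (l1 * t) + 1 / y1 t0 * (exp gain * exp (l1 * t0)))"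
    by (rule mult_left_mono) simp
  moreover have "exp (- (l1 * t)) * (1 / y1 t * exp (l1 * t)) = 1 / y1 t"
    by (metis exp_minus_inverse mult.commute mult.left_commute mult_1_right)
  moreover have "exp (- (l1 * t)) * (exp gain * exp (l1 * t) + 1 / y1 t0 * (exp gain * exp (l1 * t0)))
      = exp gain * (1 + exp (l1 * (t0 - t)) / y1 t0)"
    by (simp add: exp_minus exp_diff right_diff_distrib field_simps)
  ultimately show ?thesis
    by argo
qed

lemma inverse_y1_le_initial:
  assumes "0 \<le> t" "1 \<le> m" "1 / y1 0 \<le> k * m"
  shows "1 / y1 t \<le> exp gain * (k + 1) * m"
proof -
  have "exp (l1 * (0 - t)) / y1 0 \<le> 1 / y1 0"
    using assms l1_pos y1_0_pos by (simp add: divide_right_mono mult_nonneg_nonneg)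
  then have "1 / y1 t \<le> exp gain * (1 + 1 / y1 0)"
    using inverse_y1_le[OF order_refl assms(1)] by (smt (verit) exp_gt_zero mult_left_mono)
  also have "\<dots> \<le> exp gain * ((k + 1) * m)"
    using assms(2,3) by (intro mult_left_mono) (auto simp: algebra_simps)
  finally show ?thesis
    by (simp add: mult.assoc)
qed

lemma inverse_y1_le_min:
  assumes "\<epsilon> \<le> 1" "1 \<le> t" and q: "min (1 / y1 0) (1 / \<epsilon>) \<le> q"
  shows "1 / y1 t \<le> exp gain + exp gain * max 1 (exp l1 / barrier_slope) * q * exp (- l1 * t)"
proof -
  let ?M = "max 1 (exp l1 / barrier_slope)"
  have from_0: "1 / y1 t \<le> exp gain + exp gain * (1 / y1 0) * exp (- l1 * t)"
    using inverse_y1_le[of 0 t] assms by (simp add: field_simps)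
  have from_1: "1 / y1 t \<le> exp gain + exp gain * (exp l1 / y1 1) * exp (- l1 * t)"
    using inverse_y1_le[of 1 t] assms by (simp add: exp_diff exp_minus right_diff_distrib field_simps)
  have "exp l1 / y1 1 \<le> exp l1 / (barrier_slope * \<epsilon>)"
    using y1_at_1_gt[OF assms(1)] barrier_slope_pos \<epsilon>_pos by (simp add: frac_le)
  also have "\<dots> = exp l1 / barrier_slope * (1 / \<epsilon>)"
    by simp
  also have "\<dots> \<le> ?M * (1 / \<epsilon>)"
    using \<epsilon>_pos by (intro mult_right_mono) auto
  finally have "min (1 / y1 0) (exp l1 / y1 1) \<le> min (?M * (1 / y1 0)) (?M * (1 / \<epsilon>))"
    using y1_0_pos divide_right_mono[of 1 ?M "y1 0"] by (intro min.mono) auto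
  also have "\<dots> = ?M * min (1 / y1 0) (1 / \<epsilon>)"
    by (simp add: min_mult_distrib_left)
  also have "\<dots> \<le> ?M * q"
    using q by (simp add: mult_left_mono)
  finally have "exp gain * min (1 / y1 0) (exp l1 / y1 1) * exp (- l1 * t)
      \<le> exp gain * (?M * q) * exp (- l1 * t)"
    by (intro mult_left_mono mult_right_mono) auto
  with from_0 from_1 show ?thesis
    by (cases "1 / y1 0 \<le> exp l1 / y1 1") (simp_all add: min_def mult.assoc)
qed

end

theorem mainTheorem4:
  fixes r0 d0 d1 k \<alpha> \<beta> :: real
    and f :: "real \<Rightarrow> real \<Rightarrow> real"
    and y0 y1 yb :: "nat \<Rightarrow> real \<Rightarrow> real"
  assumes r0: "r0 \<ge> 0" and d0: "d0 \<ge> 0" and lam0: "r0 - d0 < 0"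
    and d1: "d1 > 0" and k: "k > 1"
    and alpha: "0 < \<alpha>" "\<alpha> < 1" and beta: "0 < \<beta>" "\<beta> < 1"
    and f_nonneg: "\<And>x y. x \<ge> 0 \<Longrightarrow> y \<ge> 0 \<Longrightarrow> f x y \<ge> 0"
    and A1: "\<exists>L. L-lipschitz_on ({0..} \<times> {0..}) (\<lambda>(x, y). f x y)"
    and A2a: "\<And>x y. x \<ge> 0 \<Longrightarrow> y \<ge> 0 \<Longrightarrow> x + y = 0 \<Longrightarrow> f x y = f 0 0"
    and A2b: "\<And>x y. x \<ge> 0 \<Longrightarrow> y \<ge> 0 \<Longrightarrow> x + y = 1 \<Longrightarrow> f x y = d1"
    and A2c: "f 0 0 > d1"
    and A3: "\<exists>\<Phi> :: real \<Rightarrow> real. (\<forall>s\<ge>0. \<forall>s'\<ge>s. \<Phi> s' \<le> \<Phi> s) \<and> (\<forall>s\<ge>0. \<Phi> s \<ge> 0)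
               \<and> (\<forall>x\<ge>0. \<forall>y\<ge>0. f x y = \<Phi> (x + y))"
    and A4x: "\<And>y. y \<ge> 0 \<Longrightarrow> ((\<lambda>x. f x y) \<longlongrightarrow> 0) at_top"
    and A4y: "\<And>x. x \<ge> 0 \<Longrightarrow> ((\<lambda>y. f x y) \<longlongrightarrow> 0) at_top"
    and A5: "\<And>x y. x \<ge> 0 \<Longrightarrow> y \<ge> 0 \<Longrightarrow> f x y \<ge> (f 0 0 - d1) * (1 - (x + y)) + d1"
    and ode0: "\<And>n t. n \<ge> 1 \<Longrightarrow> t \<ge> 0 \<Longrightarrow>
        (y0 n has_real_derivative (r0 - d0) * y0 n t) (at t within {0..})"
    and ode1: "\<And>n t. n \<ge> 1 \<Longrightarrow> t \<ge> 0 \<Longrightarrow>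
        (y1 n has_real_derivative (f (y0 n t) (y1 n t) - d1) * y1 n t + real n powr (-\<alpha>) * y0 n t)
          (at t within {0..})"
    and odeb: "\<And>n t. n \<ge> 1 \<Longrightarrow> t \<ge> 0 \<Longrightarrow>
        (yb n has_real_derivative (f (y0 n t) (y1 n t) - d1) * yb n t) (at t within {0..})"
    and init0: "\<And>n. n \<ge> 1 \<Longrightarrow> y0 n 0 = real n / (k * real n)"
    and init1: "\<And>n. n \<ge> 1 \<Longrightarrow> y1 n 0 = real n powr \<beta> / (k * real n)"
    and initb: "\<And>n. n \<ge> 1 \<Longrightarrow> yb n 0 = real n powr \<beta> / (k * real n)"
  shows "\<exists>c1 c2 c3 :: real. c1 > 0 \<and> c2 > 0 \<and> c3 > 0 \<and>
    (\<exists>N::nat. \<forall>n\<ge>N. \<forall>t::real.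
       (0 \<le> t \<and> t \<le> 1 \<longrightarrow> 1 / y1 n t \<le> c1 * real n powr (1 - \<beta>)) \<and>
       (t > 1 \<longrightarrow> 1 / y1 n t \<le> c2 + c3 * real n powr (min (1 - \<beta>) \<alpha>) * exp (- (f 0 0 - d1) * t)))"
proof -
  let ?l1 = "f 0 0 - d1" and ?\<epsilon> = "\<lambda>n. real n powr - \<alpha>"
  have sys: "logistic_immigration_system (r0 - d0) ?l1 k (?\<epsilon> n) (\<lambda>x y. f x y - d1) (y0 n) (y1 n)"
    if "n \<ge> 1" for n
    using that lam0 A2c k ode0 ode1 init0 init1 A5 by unfold_locales (auto simp: algebra_simps)
  define gain where "gain = logistic_immigration_system.gain (r0 - d0) ?l1 k"
  define M where "M = max 1 (exp ?l1 / logistic_immigration_system.barrier_slope (r0 - d0) k)"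
  have init: "1 / y1 n 0 = k * real n powr (1 - \<beta>)" if "n \<ge> 1" for n
    using init1[OF that] that k by (simp add: powr_diff)
  have unit: "1 / y1 n t \<le> exp gain * (k + 1) * real n powr (1 - \<beta>)" if "n \<ge> 1" "0 \<le> t" for n t
    using logistic_immigration_system.inverse_y1_le_initial[OF sys, of n t "real n powr (1 - \<beta>)"]
      init that beta by (simp add: gain_def ge_one_powr_ge_zero)
  have tail: "1 / y1 n t \<le> exp gain + exp gain * M * k * real n powr (min (1 - \<beta>) \<alpha>) * exp (- ?l1 * t)"
    if "n \<ge> 1" "1 \<le> t" for n t
    using logistic_immigration_system.inverse_y1_le_min[OF sys, of n t "k * real n powr (min (1 - \<beta>) \<alpha>)"]
      min_scaled_powr_le[of "real n" k "1 - \<beta>" \<alpha>] init that k alpha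
    by (simp add: gain_def M_def powr_minus_divide ge_one_powr_ge_zero mult.assoc)
  have pos: "exp gain * (k + 1) > 0" "exp gain * M * k > 0"
    using k unfolding M_def by simp_all
  show ?thesis
  proof (rule exI[of _ "exp gain * (k + 1)"], rule exI[of _ "exp gain"], rule exI[of _ "exp gain * M * k"])
  qed (use unit tail pos in \<open>auto intro!: exI[of _ 1]\<close>)
qed

end
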